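(* Consider the $\lambda$-SAGA algorithm (defined in the context) with fixed $\lambda\in[0,1]$. Write it as $X_{n+1}=X_n-\gamma_n(\nabla f(X_n)+\varepsilon_{n+1})$. Assume each $\nabla f_k$ is continuous, $\nabla f(x^* )=0$, and $\lim_{n\to\infty}X_n=x^*$ almost surely. Then $(\varepsilon_n)$ is a martingale difference sequence with respect to $(\mathcal F_n)$, for every $k$ one has $\phi_{n,k}\to x^*$ almost surely, and $$\lim_{n\to\infty}\mathbb E[\varepsilon_{n+1}\varepsilon_{n+1}^T\mid\mathcal F_n]=(1-\lambda)^2\,\Gamma\quad\text{a.s.},\qquad \Gamma=\frac1N\sum_{k=1}^N\nabla f_k(x^* )\big(\nabla f_k(x^* )\big)^T.$$
   Context: Let $N,d\ge1$ be integers, $f_1,\dots,f_N:\mathbb R^d\to\mathbb R$ differentiable, and $f=\frac1N\sum_{k=1}^N f_k$. The $\lambda$-SAGA algorithm with parameter $\lambda\in[0,1]$ and positive deterministic steps $(\gamma_n)_{n\ge1}$: let $X_0,X_1$ be square-integrable random vectors in $\mathbb R^d$ and $(U_n)_{n\ge2}$ i.i.d. uniform on $\{1,\dots,N\}$, independent of $(X_0,X_1)$. Set $g_{1,k}=\nabla f_k(X_0)$ for $k=1,\dots,N$ and for $n\ge1$: $X_{n+1}=X_n-\gamma_n\Big(\nabla f_{U_{n+1}}(X_n)-\lambda\big(g_{n,U_{n+1}}-\frac1N\sum_{k=1}^N g_{n,k}\big)\Big)$, and $g_{n+1,k}=\nabla f_k(X_n)$ if $U_{n+1}=k$, $g_{n+1,k}=g_{n,k}$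 otherwise. Let $\mathcal F_n=\sigma(X_0,X_1,U_2,\dots,U_n)$. Define $\phi_{n,k}$ by $\phi_{1,k}=X_0$, $\phi_{n+1,k}=X_n$ if $U_{n+1}=k$ and $\phi_{n+1,k}=\phi_{n,k}$ otherwise (so $g_{n,k}=\nabla f_k(\phi_{n,k})$). Thus $\varepsilon_{n+1}=\big(\nabla f_{U_{n+1}}(X_n)-\nabla f(X_n)\big)-\lambda\big(g_{n,U_{n+1}}-\frac1N\sum_{k}g_{n,k}\big)$.
   Formalization: The martingale difference property of $(\varepsilon_n)$ omits integrability of $\varepsilon_{n+1}$: it means $\varepsilon_{n+1}$ is $\mathcal F_{n+1}$-measurable with generalized conditional expectation zero given $\mathcal F_n$, the difference of those of its positive and negative parts. The statement above fails without it. *)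

theory Defs
  imports "HOL-Analysis.Analysis" "HOL-Probability.Probability"
begin

text \<open>State of lambda-SAGA. saga_state G N lam gam X0 X1 U m w = (X_(m+1), phi_(m+1)),
  where phi_n k is the point at which the stored gradient g_(n,k) = G k (phi_n k) was computed.
  G k is the gradient of f_k; gam n = gamma_n; U n is the index drawn at step n (n >= 2).\<close>

primrec saga_state ::
  "(nat \<Rightarrow> real^'d \<Rightarrow> real^'d) \<Rightarrow> nat \<Rightarrow> real \<Rightarrow> (nat \<Rightarrow> real) \<Rightarrow>
   ('a \<Rightarrow> real^'d) \<Rightarrow> ('a \<Rightarrow> real^'d) \<Rightarrow> (nat \<Rightarrow> 'a \<Rightarrow> nat) \<Rightarrow> nat \<Rightarrow> 'a \<Rightarrow>
   ((real^'d) \<times> (nat \<Rightarrow> real^'d))" where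
  "saga_state G N lam gam X0 X1 U 0 w = (X1 w, \<lambda>k. X0 w)"
| "saga_state G N lam gam X0 X1 U (Suc m) w =
     (let (x, \<phi>) = saga_state G N lam gam X0 X1 U m w;
          u = U (m + 2) w
      in (x - gam (Suc m) *\<^sub>R (G u x - lam *\<^sub>R (G u (\<phi> u)
                 - (1 / real N) *\<^sub>R (\<Sum>k=1..N. G k (\<phi> k)))),
          \<lambda>k. if u = k then x else \<phi> k))"

definition saga_X where
  "saga_X G N lam gam X0 X1 U n w =
     (if n = 0 then X0 w else fst (saga_state G N lam gam X0 X1 U (n - 1) w))"

text \<open>phi_(n,k) for n >= 1.\<close>
definition saga_phi where
  "saga_phi G N lam gam X0 X1 U n k w = snd (saga_state G N lam gam X0 X1 U (n - 1) w) k"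

text \<open>The noise eps_(n+1) for n >= 1 (here saga_eps ... n = eps_(n+1)), with
  grad f(x) = (1/N) sum_k G k x.\<close>
definition saga_eps where
  "saga_eps G N lam gam X0 X1 U n w =
     (let x = saga_X G N lam gam X0 X1 U n w; u = U (n + 1) w;
          \<phi> = (\<lambda>k. saga_phi G N lam gam X0 X1 U n k w)
      in (G u x - (1 / real N) *\<^sub>R (\<Sum>k=1..N. G k x))
         - lam *\<^sub>R (G u (\<phi> u) - (1 / real N) *\<^sub>R (\<Sum>k=1..N. G k (\<phi> k))))"

definition saga_filt :: "'a measure \<Rightarrow> ('a \<Rightarrow> real^'d) \<Rightarrow> ('a \<Rightarrow> real^'d) \<Rightarrow>
    (nat \<Rightarrow> 'a \<Rightarrow> nat) \<Rightarrow> nat \<Rightarrow> 'a measure" where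
  "saga_filt M X0 X1 U n = sigma (space M)
     ({(\<lambda>w. (X0 w, X1 w)) -` A \<inter> space M | A. A \<in> sets borel}
      \<union> (\<Union>i\<in>{2..n}. {U i -` A \<inter> space M | A. A \<in> sets (count_space UNIV)}))"

end

theory Submission
  imports Defs
begin

text \<open>Given \<open>F\<^sub>n\<close>, the iterate \<open>X\<^sub>n\<close> and the memory \<open>\<phi>\<^sub>n\<close> are known, and the only fresh
  randomness in \<open>\<epsilon>\<^sub>n\<^sub>+\<^sub>1\<close> is the index \<open>U\<^sub>n\<^sub>+\<^sub>1\<close>, which is independent of \<open>F\<^sub>n\<close> and uniform
  on \<open>{1..N}\<close>. Conditional expectations of functions of \<open>\<epsilon>\<^sub>n\<^sub>+\<^sub>1\<close> are therefore plain
  averages over the \<open>N\<close> possible indices. The average of \<open>\<epsilon>\<^sub>n\<^sub>+\<^sub>1\<close> vanishes because both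
  of its bracketed terms are centred, and the conditional covariance is \<open>(1/N) \<Sum>\<^sub>u a\<^sub>u a\<^sub>u\<^sup>T\<close>,
  where \<open>a\<^sub>u\<close> is the noise obtained if index \<open>u\<close> is drawn. By the second Borel--Cantelli
  lemma every index is drawn infinitely often almost surely, so \<open>\<phi>\<^sub>n\<^sub>,\<^sub>k\<close> is eventually a
  late iterate and tends to \<open>x\<^sup>*\<close>. By continuity of the gradients, and since
  \<open>\<Sum>\<^sub>k \<nabla>f\<^sub>k(x\<^sup>*) = N \<nabla>f(x\<^sup>*) = 0\<close>, each \<open>a\<^sub>u\<close> tends to \<open>(1 - \<lambda>) \<nabla>f\<^sub>u(x\<^sup>*)\<close>.\<close>

lemma GDERIV_unique:
  assumes "GDERIV f x :> D" and "GDERIV f x :> D'"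
  shows "D = D'"
proof -
  have "(\<lambda>h. h \<bullet> D) = (\<lambda>h. h \<bullet> D')"
    using has_derivative_unique assms unfolding gderiv_def by blast
  then have "(D - D') \<bullet> (D - D') = 0"
    by (metis inner_diff_right right_minus_eq)
  then show ?thesis by simp
qed

lemma GDERIV_scaled_sum:
  assumes "\<And>k. k \<in> K \<Longrightarrow> GDERIV (f k) x :> D k"
  shows "GDERIV (\<lambda>x. c * (\<Sum>k\<in>K. f k x)) x :> c *\<^sub>R (\<Sum>k\<in>K. D k)"
  using assms unfolding gderiv_def inner_scaleR_right inner_sum_right
  by (intro has_derivative_mult_right has_derivative_sum) auto

lemma sum_centered:
  fixes h :: "nat \<Rightarrow> 'a::real_vector"
  assumes "N \<ge> 1"
  shows "(\<Sum>u=1..N. h u - (1 / real N) *\<^sub>R (\<Sum>k=1..N. h k)) = 0"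
proof -
  have "(\<Sum>u=1..N. (1 / real N) *\<^sub>R v) = v" for v :: 'a
    using assms by (simp add: sum_constant_scaleR)
  then show ?thesis by (simp add: sum_subtractf)
qed

lemma borel_measurable_vec_nth:
  "(f :: 'a \<Rightarrow> real^'n) \<in> borel_measurable M \<Longrightarrow> (\<lambda>w. f w $ i) \<in> borel_measurable M"
  by (rule measurable_compose[of f M borel "\<lambda>x. x $ i", OF _ borel_measurable_continuous_onI])
     (auto intro: linear_continuous_on)

lemma Int_stable_vimage: "Int_stable {f -` A \<inter> S | A. A \<in> sets K}"
proof (rule Int_stableI)
  fix a b assume "a \<in> {f -` A \<inter> S | A. A \<in> sets K}" "b \<in> {f -` A \<inter> S | A. A \<in> sets K}"
  then obtain A B where "A \<in> sets K" "B \<in> sets K" "a = f -` A \<inter> S" "b = f -` B \<inter> S"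
    by blast
  then show "a \<inter> b \<in> {f -` A \<inter> S | A. A \<in> sets K}"
    by (intro CollectI exI[of _ "A \<inter> B"]) auto
qed

lemma LIMSEQ_of_frequent_reset:
  fixes x y :: "nat \<Rightarrow> 'a::metric_space"
  assumes x: "x \<longlonglongrightarrow> l" and reset: "\<exists>\<^sub>F n in sequentially. b n"
    and y: "\<And>n. n \<ge> s \<Longrightarrow> y (Suc n) = (if b n then x n else y n)"
  shows "y \<longlonglongrightarrow> l"
  unfolding lim_sequentially
proof (intro allI impI)
  fix e :: real assume "e > 0"
  with x obtain M0 where M0: "\<And>m. m \<ge> M0 \<Longrightarrow> dist (x m) l < e"
    unfolding lim_sequentially by blast
  from reset obtain m where m: "m \<ge> max M0 s" "b m"
    unfolding frequently_sequentially by blast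
  have "\<exists>k\<ge>M0. y n = x k" if "n \<ge> Suc m" for n
    using that
  proof (induction n rule: dec_induct)
    case base
    then show ?case using y[of m] m by auto
  next
    case (step n)
    show ?case
    proof (cases "b n")
      case True
      then show ?thesis using y[of n] m step.hyps by (intro exI[of _ n]) auto
    next
      case False
      then show ?thesis using y[of n] m step by auto
    qed
  qed
  with M0 show "\<exists>n0. \<forall>n\<ge>n0. dist (y n) l < e"
    by metis
qed

lemma (in prob_space) AE_frequently_notin_indep_events:
  assumes indep: "indep_events D {m0..}"
    and prob_le: "\<And>m. m \<ge> m0 \<Longrightarrow> prob (D m) \<le> q" and q: "q < 1"
  shows "AE w in M. \<exists>\<^sub>F m in sequentially. w \<notin> D m"
proof -
  have D: "D m \<in> events" if "m \<ge> m0" for m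
    using indep that by (auto simp: indep_events_def)
  have q0: "0 \<le> q" using prob_le[of m0] measure_nonneg[of M "D m0"] by linarith
  have "AE w in M. \<exists>m\<ge>M0. w \<notin> D m" for M0
  proof -
    define M1 where "M1 = max M0 m0"
    define B where "B = (\<Inter>m\<in>{M1..}. D m)"
    have B: "B \<in> events"
      unfolding B_def by (rule sets.countable_INT') (auto simp: M1_def intro!: D)
    have "prob B \<le> q ^ Suc L" for L
    proof -
      have "prob B \<le> prob (\<Inter>m\<in>{M1..M1+L}. D m)"
        unfolding B_def by (intro finite_measure_mono) (auto simp: M1_def intro!: D)
      also have "\<dots> = (\<Prod>m\<in>{M1..M1+L}. prob (D m))"
        using indep by (auto simp: indep_events_def M1_def)
      also have "\<dots> \<le> (\<Prod>m\<in>{M1..M1+L}. q)"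
        by (intro prod_mono) (auto simp: M1_def intro!: prob_le)
      finally show ?thesis by simp
    qed
    moreover have "(\<lambda>L. q ^ Suc L) \<longlonglongrightarrow> 0"
      using LIMSEQ_Suc[OF LIMSEQ_power_zero[of q]] q q0 by simp
    ultimately have "prob B \<le> 0"
      by (intro LIMSEQ_le_const) auto
    then have "B \<in> null_sets M"
      using B measure_nonneg[of M B] by (auto simp: emeasure_eq_measure)
    then show ?thesis
      by (rule AE_I') (auto simp: B_def M1_def)
  qed
  then show ?thesis
    by (simp add: frequently_sequentially AE_all_countable)
qed

section \<open>Conditioning on an independent uniform index\<close>

lemma nn_integral_indicator_mult_of_indep:
  assumes M: "finite_measure M" and F: "subalgebra M F" and S: "S \<in> sets M" and c: "c \<ge> 0"
    and indep: "\<And>A. A \<in> sets F \<Longrightarrow> measure M (S \<inter> A) = c * measure M A"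
    and g: "g \<in> borel_measurable F"
  shows "(\<integral>\<^sup>+x. indicator S x * g x \<partial>M) = ennreal c * (\<integral>\<^sup>+x. g x \<partial>M)"
proof -
  let ?D = "density M (indicator S)"
  have F_D: "subalgebra ?D F"
    using F by (simp add: subalgebra_def)
  have FM: "A \<in> sets F \<Longrightarrow> A \<in> sets M" for A
    using F by (auto simp: subalgebra_def)
  have restr_D: "restr_to_subalg ?D F = scale_measure (ennreal c) (restr_to_subalg M F)"
  proof (rule measure_eqI)
    fix A assume "A \<in> sets (restr_to_subalg ?D F)"
    then have A: "A \<in> sets F" using sets_restr_to_subalg[OF F_D] by simp
    have "emeasure ?D A = emeasure M (S \<inter> A)"
      using S FM[OF A] by (simp add: emeasure_density flip: indicator_inter_arith)
    also have "\<dots> = ennreal c * emeasure M A"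
      using M S FM[OF A] indep[OF A] c
      by (simp add: finite_measure.emeasure_eq_measure ennreal_mult)
    finally show "emeasure (restr_to_subalg ?D F) A = emeasure (scale_measure (ennreal c) (restr_to_subalg M F)) A"
      using A by (simp add: emeasure_restr_to_subalg F F_D)
  qed (simp add: sets_restr_to_subalg F F_D)
  have gM: "g \<in> borel_measurable M"
    using measurable_from_subalg[OF F g] .
  have "(\<integral>\<^sup>+x. indicator S x * g x \<partial>M) = (\<integral>\<^sup>+x. g x \<partial>?D)"
    using S gM by (simp add: nn_integral_density)
  also have "\<dots> = (\<integral>\<^sup>+x. g x \<partial>restr_to_subalg ?D F)"
    by (rule nn_integral_subalgebra2[OF F_D g, symmetric])
  also have "\<dots> = ennreal c * (\<integral>\<^sup>+x. g x \<partial>restr_to_subalg M F)"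
    using g F by (simp add: restr_D nn_integral_scale_measure measurable_in_subalg)
  also have "\<dots> = ennreal c * (\<integral>\<^sup>+x. g x \<partial>M)"
    by (simp add: nn_integral_subalgebra2[OF F g])
  finally show ?thesis .
qed

lemma (in finite_measure) set_nn_integral_uniform_index:
  assumes F: "subalgebra M F"
    and U: "U \<in> measurable M (count_space {1..N})"
    and uniform: "\<And>A k. A \<in> sets F \<Longrightarrow> k \<in> {1..N} \<Longrightarrow>
        measure M ({w\<in>space M. U w = k} \<inter> A) = (1/real N) * measure M A"
    and h: "\<And>k. k \<in> {1..N} \<Longrightarrow> h k \<in> borel_measurable F"
    and A: "A \<in> sets F"
  shows "(\<integral>\<^sup>+x\<in>A. h (U x) x \<partial>M) = (\<integral>\<^sup>+x\<in>A. ennreal (1/real N) * (\<Sum>k=1..N. h k x) \<partial>M)"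
proof -
  have hM: "h k \<in> borel_measurable M" if "k \<in> {1..N}" for k
    using measurable_from_subalg[OF F h[OF that]] .
  have AM: "A \<in> sets M"
    using A F by (auto simp: subalgebra_def)
  have S: "{w\<in>space M. U w = k} \<in> sets M" for k
  proof -
    have "{w\<in>space M. U w = k} = U -` ({k} \<inter> {1..N}) \<inter> space M"
      using measurable_space[OF U] by auto
    also have "\<dots> \<in> sets M"
      by (rule measurable_sets[OF U]) auto
    finally show ?thesis .
  qed
  have split: "h (U x) x * indicator A x =
      (\<Sum>k=1..N. indicator {w\<in>space M. U w = k} x * (h k x * indicator A x))" if "x \<in> space M" for x
  proof -
    have "(\<Sum>k=1..N. indicator {w\<in>space M. U w = k} x * (h k x * indicator A x))
        = (\<Sum>k\<in>{1..N}. if U x = k then h k x * indicator A x else 0)"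
      by (rule sum.cong) (auto simp: indicator_def that)
    then show ?thesis using measurable_space[OF U that] by simp
  qed
  have "(\<integral>\<^sup>+x\<in>A. h (U x) x \<partial>M) =
      (\<integral>\<^sup>+x. (\<Sum>k=1..N. indicator {w\<in>space M. U w = k} x * (h k x * indicator A x)) \<partial>M)"
    by (rule nn_integral_cong) (rule split)
  also have "\<dots> = (\<Sum>k=1..N. \<integral>\<^sup>+x. indicator {w\<in>space M. U w = k} x * (h k x * indicator A x) \<partial>M)"
    by (rule nn_integral_sum) (use hM AM S in auto)
  also have "\<dots> = (\<Sum>k=1..N. ennreal (1/real N) * (\<integral>\<^sup>+x. h k x * indicator A x \<partial>M))"
    by (intro sum.cong refl nn_integral_indicator_mult_of_indep[OF finite_measure_axioms F S])
       (use uniform A h in auto)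
  also have "\<dots> = (\<Sum>k=1..N. \<integral>\<^sup>+x. ennreal (1/real N) * (h k x * indicator A x) \<partial>M)"
    by (intro sum.cong refl nn_integral_cmult[symmetric]) (use hM AM in auto)
  also have "\<dots> = (\<integral>\<^sup>+x. (\<Sum>k=1..N. ennreal (1/real N) * (h k x * indicator A x)) \<partial>M)"
    by (rule nn_integral_sum[symmetric]) (use hM AM in auto)
  also have "\<dots> = (\<integral>\<^sup>+x\<in>A. ennreal (1/real N) * (\<Sum>k=1..N. h k x) \<partial>M)"
    by (simp add: sum_distrib_left sum_distrib_right mult.assoc)
  finally show ?thesis .
qed

lemma (in finite_measure) nn_cond_exp_uniform_index:
  assumes F: "subalgebra M F"
    and U: "U \<in> measurable M (count_space {1..N})"
    and uniform: "\<And>A k. A \<in> sets F \<Longrightarrow> k \<in> {1..N} \<Longrightarrow>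
        measure M ({w\<in>space M. U w = k} \<inter> A) = (1/real N) * measure M A"
    and h: "\<And>k. k \<in> {1..N} \<Longrightarrow> h k \<in> borel_measurable F"
  shows "AE w in M. nn_cond_exp M F (\<lambda>w. h (U w) w) w = ennreal (1/real N) * (\<Sum>k=1..N. h k w)"
proof -
  interpret finite_measure_subalgebra M F
    using F by unfold_locales (simp_all add: subalgebra_def)
  have hU: "(\<lambda>w. h (U w) w) \<in> borel_measurable M"
    by (rule measurable_compose_countable'[OF measurable_from_subalg[OF F h] U]) auto
  have avg: "(\<lambda>w. ennreal (1/real N) * (\<Sum>k=1..N. h k w)) \<in> borel_measurable F"
    using h by measurable
  have "(\<integral>\<^sup>+x\<in>A. h (U x) x \<partial>M) = (\<integral>\<^sup>+x\<in>A. ennreal (1/real N) * (\<Sum>k=1..N. h k x) \<partial>M)"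
    if "A \<in> sets F" for A
    by (rule set_nn_integral_uniform_index[OF F U uniform h that])
  then show ?thesis
    using nn_cond_exp_charact[OF _ hU avg] by (simp add: AE_symmetric)
qed

lemma (in finite_measure) real_cond_exp_uniform_index:
  assumes F: "subalgebra M F"
    and U: "U \<in> measurable M (count_space {1..N})"
    and uniform: "\<And>A k. A \<in> sets F \<Longrightarrow> k \<in> {1..N} \<Longrightarrow>
        measure M ({w\<in>space M. U w = k} \<inter> A) = (1/real N) * measure M A"
    and a: "\<And>k. k \<in> {1..N} \<Longrightarrow> a k \<in> borel_measurable F"
  shows "AE w in M. real_cond_exp M F (\<lambda>w. a (U w) w) w = (1/real N) * (\<Sum>k=1..N. a k w)"
proof -
  have pos: "AE w in M. nn_cond_exp M F (\<lambda>w. ennreal (a (U w) w)) w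
      = ennreal (1/real N) * (\<Sum>k=1..N. ennreal (a k w))"
    by (rule nn_cond_exp_uniform_index[OF F U uniform]) (use a in auto)
  have neg: "AE w in M. nn_cond_exp M F (\<lambda>w. ennreal (- a (U w) w)) w
      = ennreal (1/real N) * (\<Sum>k=1..N. ennreal (- a k w))"
    by (rule nn_cond_exp_uniform_index[OF F U uniform]) (use a in auto)
  have enn2real_avg: "enn2real (ennreal (1/real N) * (\<Sum>k=1..N. ennreal (b k)))
      = (1/real N) * (\<Sum>k=1..N. max (b k) 0)" for b :: "nat \<Rightarrow> real"
  proof -
    have "ennreal (b k) = ennreal (max (b k) 0)" for k
      by (cases "b k \<ge> 0") (auto simp: ennreal_neg max_def)
    then have "(\<Sum>k=1..N. ennreal (b k)) = (\<Sum>k=1..N. ennreal (max (b k) 0))"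
      by simp
    also have "\<dots> = ennreal (\<Sum>k=1..N. max (b k) 0)"
      by (rule sum_ennreal) simp
    finally
    show ?thesis by (simp add: enn2real_mult sum_nonneg)
  qed
  have pos_minus_neg: "(\<Sum>k=1..N. max (b k) 0) - (\<Sum>k=1..N. max (- b k) 0) = (\<Sum>k=1..N. b k)"
    for b :: "nat \<Rightarrow> real"
    by (simp add: sum_subtractf[symmetric] max_def) (rule sum.cong, auto)
  from pos neg show ?thesis
  proof eventually_elim
    case (elim w)
    then have "real_cond_exp M F (\<lambda>w. a (U w) w) w
        = enn2real (ennreal (1/real N) * (\<Sum>k=1..N. ennreal (a k w)))
          - enn2real (ennreal (1/real N) * (\<Sum>k=1..N. ennreal (- a k w)))"
      by (simp only: real_cond_exp_def)
    also have "\<dots> = (1/real N) * ((\<Sum>k=1..N. max (a k w) 0) - (\<Sum>k=1..N. max (- a k w) 0))"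
      by (simp only: enn2real_avg right_diff_distrib)
    finally show ?case
      by (simp only: pos_minus_neg)
  qed
qed

section \<open>The \<open>\<lambda>\<close>-SAGA recursion\<close>

definition saga_noise ::
  "(nat \<Rightarrow> 'a \<Rightarrow> 'b::real_vector) \<Rightarrow> nat \<Rightarrow> real \<Rightarrow> 'a \<Rightarrow> (nat \<Rightarrow> 'a) \<Rightarrow> nat \<Rightarrow> 'b" where
  "saga_noise G N lam x \<phi> u =
     (G u x - (1 / real N) *\<^sub>R (\<Sum>k=1..N. G k x))
     - lam *\<^sub>R (G u (\<phi> u) - (1 / real N) *\<^sub>R (\<Sum>k=1..N. G k (\<phi> k)))"

lemma sum_saga_noise:
  assumes "N \<ge> 1"
  shows "(\<Sum>u=1..N. saga_noise G N lam x \<phi> u) = 0"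
proof -
  have "(\<Sum>u=1..N. saga_noise G N lam x \<phi> u)
      = (\<Sum>u=1..N. G u x - (1 / real N) *\<^sub>R (\<Sum>k=1..N. G k x))
        - lam *\<^sub>R (\<Sum>u=1..N. G u (\<phi> u) - (1 / real N) *\<^sub>R (\<Sum>k=1..N. G k (\<phi> k)))"
    unfolding saga_noise_def by (rule trans[OF sum_subtractf]) (simp only: scaleR_sum_right)
  then show ?thesis
    using sum_centered[OF assms, of "\<lambda>u. G u x"] sum_centered[OF assms, of "\<lambda>u. G u (\<phi> u)"] by simp
qed

lemma tendsto_saga_noise:
  fixes G :: "nat \<Rightarrow> 'a::t2_space \<Rightarrow> 'b::real_normed_vector"
  assumes G: "\<And>k. k \<in> {1..N} \<Longrightarrow> isCont (G k) l"
    and x: "(x \<longlongrightarrow> l) F" and \<phi>: "\<And>k. k \<in> {1..N} \<Longrightarrow> ((\<lambda>n. \<phi> n k) \<longlongrightarrow> l) F"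
    and crit: "(\<Sum>k=1..N. G k l) = 0" and u: "u \<in> {1..N}"
  shows "((\<lambda>n. saga_noise G N lam (x n) (\<phi> n) u) \<longlongrightarrow> (1 - lam) *\<^sub>R G u l) F"
proof -
  have Gx: "((\<lambda>n. G k (x n)) \<longlongrightarrow> G k l) F" if "k \<in> {1..N}" for k
    by (rule isCont_tendsto_compose[OF G[OF that] x])
  have G\<phi>: "((\<lambda>n. G k (\<phi> n j)) \<longlongrightarrow> G k l) F" if "k \<in> {1..N}" "j \<in> {1..N}" for k j
    by (rule isCont_tendsto_compose[OF G[OF that(1)] \<phi>[OF that(2)]])
  have "((\<lambda>n. saga_noise G N lam (x n) (\<phi> n) u) \<longlongrightarrow>
      (G u l - (1 / real N) *\<^sub>R (\<Sum>k=1..N. G k l)) - lam *\<^sub>R (G u l - (1 / real N) *\<^sub>R (\<Sum>k=1..N. G k l))) F"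
    unfolding saga_noise_def
    by (intro tendsto_intros Gx G\<phi> u) auto
  then show ?thesis
    using crit by (simp add: algebra_simps)
qed

lemma saga_eps_eq_noise:
  "saga_eps G N lam gam X0 X1 U n w =
     saga_noise G N lam (saga_X G N lam gam X0 X1 U n w)
       (\<lambda>k. saga_phi G N lam gam X0 X1 U n k w) (U (n + 1) w)"
  by (simp add: saga_eps_def saga_noise_def Let_def)

lemma saga_X_1: "saga_X G N lam gam X0 X1 U 1 = X1"
  by (simp add: saga_X_def fun_eq_iff)

lemma saga_phi_1: "saga_phi G N lam gam X0 X1 U 1 k = X0"
  by (simp add: saga_phi_def fun_eq_iff)

lemma saga_X_Suc:
  assumes "n \<ge> 1"
  shows "saga_X G N lam gam X0 X1 U (Suc n) w =
    (let x = saga_X G N lam gam X0 X1 U n w; \<phi> = (\<lambda>k. saga_phi G N lam gam X0 X1 U n k w);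
         u = U (n + 1) w
     in x - gam n *\<^sub>R (G u x - lam *\<^sub>R (G u (\<phi> u) - (1 / real N) *\<^sub>R (\<Sum>k=1..N. G k (\<phi> k)))))"
  using assms by (cases n) (simp_all add: saga_X_def saga_phi_def Let_def case_prod_beta)

lemma saga_phi_Suc:
  assumes "n \<ge> 1"
  shows "saga_phi G N lam gam X0 X1 U (Suc n) k w =
    (if U (n + 1) w = k then saga_X G N lam gam X0 X1 U n w else saga_phi G N lam gam X0 X1 U n k w)"
  using assms by (cases n) (simp_all add: saga_phi_def saga_X_def Let_def case_prod_beta)

locale lambda_saga = prob_space M
  for M :: "'a measure" and G :: "nat \<Rightarrow> real^'d \<Rightarrow> real^'d"
    and N :: nat and lam :: real and gam :: "nat \<Rightarrow> real"
    and X0 X1 :: "'a \<Rightarrow> real^'d" and U :: "nat \<Rightarrow> 'a \<Rightarrow> nat" +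
  assumes N: "N \<ge> 1"
    and G_cont: "\<And>k. k \<in> {1..N} \<Longrightarrow> continuous_on UNIV (G k)"
    and U_meas: "\<And>n. n \<ge> 2 \<Longrightarrow> U n \<in> measurable M (count_space {1..N})"
    and U_unif: "\<And>n k. n \<ge> 2 \<Longrightarrow> k \<in> {1..N} \<Longrightarrow>
                   measure M {w \<in> space M. U n w = k} = 1 / real N"
    and indep: "indep_sets
        (\<lambda>i. if i = 0 then {(\<lambda>w. (X0 w, X1 w)) -` A \<inter> space M | A. A \<in> sets borel}
              else {U i -` A \<inter> space M | A. A \<in> sets (count_space UNIV)})
        (insert 0 {2..})"
begin

abbreviation "filt \<equiv> saga_filt M X0 X1 U"
abbreviation "X \<equiv> saga_X G N lam gam X0 X1 U"
abbreviation "phi \<equiv> saga_phi G N lam gam X0 X1 U"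
abbreviation "eps \<equiv> saga_eps G N lam gam X0 X1 U"

definition gen :: "nat \<Rightarrow> 'a set set" where
  "gen i = (if i = 0 then {(\<lambda>w. (X0 w, X1 w)) -` A \<inter> space M | A. A \<in> sets borel}
            else {U i -` A \<inter> space M | A. A \<in> sets (count_space UNIV)})"

lemma indep_gen: "indep_sets gen (insert 0 {2..})"
  using indep unfolding gen_def .

lemma gen_events: "i \<in> insert 0 {2..} \<Longrightarrow> gen i \<subseteq> events"
  using indep_gen unfolding indep_sets_def by blast

lemma saga_filt_eq: "filt n = sigma (space M) (\<Union>i\<in>insert 0 {2..n}. gen i)"
proof -
  have "(\<Union>i\<in>{2..n}. gen i) = (\<Union>i\<in>{2..n}. {U i -` A \<inter> space M | A. A \<in> sets (count_space UNIV)})"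
    by (rule SUP_cong) (auto simp: gen_def)
  moreover have "gen 0 = {(\<lambda>w. (X0 w, X1 w)) -` A \<inter> space M | A. A \<in> sets borel}"
    by (simp add: gen_def)
  ultimately show ?thesis
    unfolding saga_filt_def by (simp only: UN_insert)
qed

lemma gen_Pow: "(\<Union>i\<in>I. gen i) \<subseteq> Pow (space M)"
  unfolding gen_def by auto

lemma sets_saga_filt: "sets (filt n) = sigma_sets (space M) (\<Union>i\<in>insert 0 {2..n}. gen i)"
  unfolding saga_filt_eq by (rule sets_measure_of[OF gen_Pow])

lemma space_saga_filt: "space (filt n) = space M"
  unfolding saga_filt_eq by (rule space_measure_of[OF gen_Pow])

lemma subalgebra_saga_filt: "subalgebra M (filt n)"
proof -
  have "(\<Union>i\<in>insert 0 {2..n}. gen i) \<subseteq> events"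
    by (intro UN_least gen_events) auto
  then show ?thesis
    unfolding subalgebra_def space_saga_filt sets_saga_filt by (simp add: sets.sigma_sets_subset)
qed

lemma gen_in_saga_filt: "i \<in> insert 0 {2..n} \<Longrightarrow> B \<in> gen i \<Longrightarrow> B \<in> sets (filt n)"
  unfolding sets_saga_filt by (rule sigma_sets.Basic) blast

lemma U_measurable_saga_filt:
  assumes "2 \<le> i" "i \<le> n"
  shows "U i \<in> measurable (filt n) (count_space {1..N})"
proof (subst measurable_count_space_eq2)
  have "U i -` {k} \<inter> space M \<in> sets (filt n)" for k
    by (rule gen_in_saga_filt[of i]) (use assms in \<open>auto simp: gen_def\<close>)
  then show "U i \<in> space (filt n) \<rightarrow> {1..N} \<and> (\<forall>k\<in>{1..N}. U i -` {k} \<inter> space (filt n) \<in> sets (filt n))"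
    using measurable_space[OF U_meas[OF assms(1)]] by (auto simp: space_saga_filt)
qed simp

lemma initial_measurable_saga_filt: "(\<lambda>w. (X0 w, X1 w)) \<in> borel_measurable (filt n)"
proof (rule measurableI)
  fix A :: "((real^'d) \<times> (real^'d)) set" assume "A \<in> sets borel"
  then have "(\<lambda>w. (X0 w, X1 w)) -` A \<inter> space M \<in> gen 0"
    unfolding gen_def by auto
  then show "(\<lambda>w. (X0 w, X1 w)) -` A \<inter> space (filt n) \<in> sets (filt n)"
    unfolding space_saga_filt by (rule gen_in_saga_filt[rotated]) auto
qed auto

lemma X0_measurable_saga_filt: "X0 \<in> borel_measurable (filt n)"
  and X1_measurable_saga_filt: "X1 \<in> borel_measurable (filt n)"
proof -
  have "(\<lambda>w. fst (X0 w, X1 w)) \<in> borel_measurable (filt n)"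
       "(\<lambda>w. snd (X0 w, X1 w)) \<in> borel_measurable (filt n)"
    by (intro measurable_compose[OF initial_measurable_saga_filt] borel_measurable_continuous_onI
        continuous_intros)+
  then show "X0 \<in> borel_measurable (filt n)" "X1 \<in> borel_measurable (filt n)"
    by simp_all
qed

lemma G_measurable: "k \<in> {1..N} \<Longrightarrow> G k \<in> borel_measurable borel"
  by (rule borel_measurable_continuous_onI[OF G_cont])

lemma saga_measurable:
  assumes "1 \<le> n" "n \<le> m"
  shows "X n \<in> borel_measurable (filt m) \<and> (\<forall>k. phi n k \<in> borel_measurable (filt m))"
  using assms
proof (induction n)
  case (Suc n)
  show ?case
  proof (cases "n = 0")
    case True
    then show ?thesis
      by (simp add: saga_X_1[unfolded One_nat_def] saga_phi_1[unfolded One_nat_def]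
          X0_measurable_saga_filt X1_measurable_saga_filt)
  next
    case False
    then have n: "1 \<le> n" by simp
    with Suc have X: "X n \<in> borel_measurable (filt m)"
      and phi: "\<And>k. phi n k \<in> borel_measurable (filt m)" by auto
    have UF: "U (n + 1) \<in> measurable (filt m) (count_space {1..N})"
      by (rule U_measurable_saga_filt) (use n Suc.prems in auto)
    have GX: "(\<lambda>w. G u (X n w)) \<in> borel_measurable (filt m)" if "u \<in> {1..N}" for u
      by (rule measurable_compose[OF X G_measurable[OF that]])
    have Gphi: "(\<lambda>w. G u (phi n j w)) \<in> borel_measurable (filt m)" if "u \<in> {1..N}" for u j
      by (rule measurable_compose[OF phi G_measurable[OF that]])
    have "(\<lambda>w. G (U (n + 1) w) (X n w)) \<in> borel_measurable (filt m)"
      by (rule measurable_compose_countable'[OF GX UF]) auto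
    moreover have "(\<lambda>w. G (U (n + 1) w) (phi n (U (n + 1) w) w)) \<in> borel_measurable (filt m)"
      by (rule measurable_compose_countable'[OF _ UF, where f="\<lambda>u w. G u (phi n u w)"]) (auto intro: Gphi)
    ultimately have "X (Suc n) \<in> borel_measurable (filt m)"
      unfolding saga_X_Suc[OF n, abs_def] Let_def
      by (intro borel_measurable_diff borel_measurable_scaleR borel_measurable_const
          borel_measurable_sum X Gphi) auto
    moreover have "phi (Suc n) k \<in> borel_measurable (filt m)" for k
    proof -
      have "{w \<in> space (filt m). U (n + 1) w = k} = U (n + 1) -` ({k} \<inter> {1..N}) \<inter> space (filt m)"
        using measurable_space[OF UF] by auto
      also have "\<dots> \<in> sets (filt m)"
        by (rule measurable_sets[OF UF]) auto
      finally show ?thesis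
        unfolding saga_phi_Suc[OF n, abs_def] by (rule measurable_If[OF X phi])
    qed
    ultimately show ?thesis by blast
  qed
qed simp

lemma saga_noise_measurable:
  assumes "1 \<le> n" "n \<le> m" "u \<in> {1..N}"
  shows "(\<lambda>w. saga_noise G N lam (X n w) (\<lambda>k. phi n k w) u) \<in> borel_measurable (filt m)"
proof -
  have X: "X n \<in> borel_measurable (filt m)" and phi: "\<And>k. phi n k \<in> borel_measurable (filt m)"
    using saga_measurable[OF assms(1,2)] by auto
  show ?thesis
    unfolding saga_noise_def
    by (intro borel_measurable_diff borel_measurable_scaleR borel_measurable_const borel_measurable_sum
        measurable_compose[OF X G_measurable] measurable_compose[OF phi G_measurable] assms(3)) auto
qed

lemma saga_eps_measurable: "1 \<le> n \<Longrightarrow> eps n \<in> borel_measurable (filt (n + 1))"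
  unfolding saga_eps_eq_noise[abs_def]
  by (rule measurable_compose_countable'[OF _ U_measurable_saga_filt,
        where f="\<lambda>u w. saga_noise G N lam (X n w) (\<lambda>k. phi n k w) u"])
     (auto intro: saga_noise_measurable)

lemma indep_saga_filt_gen_next:
  assumes n: "1 \<le> n" and A: "A \<in> sets (filt n)" and B: "B \<in> gen (n + 1)"
  shows "prob (A \<inter> B) = prob A * prob B"
proof -
  define I where "I b = (if b then insert 0 {2..n} else {n + 1})" for b :: bool
  have "indep_sets gen (\<Union>b. I b)"
    by (rule indep_sets_mono_index[OF _ indep_gen]) (use n in \<open>auto simp: I_def\<close>)
  moreover have "Int_stable (gen i)" for i
    unfolding gen_def by (simp only: split: if_split) (blast intro: Int_stable_vimage)
  moreover have "disjoint_family_on I UNIV"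
    unfolding disjoint_family_on_def I_def by auto
  ultimately have indep_collect: "indep_sets (\<lambda>b. sigma_sets (space M) (\<Union>i\<in>I b. gen i)) UNIV"
    by (intro indep_sets_collect_sigma) auto
  define C where "C b = (if b then A else B)" for b :: bool
  have "prob (\<Inter>b. C b) = (\<Prod>b\<in>UNIV. prob (C b))"
  proof (rule indep_setsD[OF indep_collect])
    show "\<forall>b\<in>UNIV. C b \<in> sigma_sets (space M) (\<Union>i\<in>I b. gen i)"
      using A B by (auto simp: C_def I_def sets_saga_filt)
  qed auto
  then show ?thesis
    by (simp add: C_def UNIV_bool Int_commute)
qed

lemma prob_next_index_Int:
  assumes n: "1 \<le> n" and A: "A \<in> sets (filt n)" and k: "k \<in> {1..N}"
  shows "measure M ({w\<in>space M. U (n + 1) w = k} \<inter> A) = (1 / real N) * measure M A"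
proof -
  have "{w\<in>space M. U (n + 1) w = k} \<in> gen (n + 1)"
    unfolding gen_def by (auto intro!: exI[of _ "{k}"])
  then have "prob (A \<inter> {w\<in>space M. U (n + 1) w = k}) = prob A * (1 / real N)"
    using indep_saga_filt_gen_next[OF n A] U_unif[OF _ k, of "n + 1"] n by simp
  then show ?thesis
    by (simp add: Int_commute)
qed

lemma real_cond_exp_next_index:
  assumes n: "1 \<le> n" and b: "\<And>u. u \<in> {1..N} \<Longrightarrow> b u \<in> borel_measurable (filt n)"
  shows "AE w in M. real_cond_exp M (filt n) (\<lambda>w. b (U (n + 1) w) w) w = (1 / real N) * (\<Sum>u=1..N. b u w)"
  by (rule real_cond_exp_uniform_index[OF subalgebra_saga_filt U_meas _ b])
     (use n prob_next_index_Int in auto)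

lemma real_cond_exp_saga_eps:
  assumes n: "1 \<le> n"
  shows "AE w in M. real_cond_exp M (filt n) (\<lambda>w. eps n w $ i) w = 0"
proof -
  have "AE w in M. real_cond_exp M (filt n) (\<lambda>w. eps n w $ i) w
      = (1 / real N) * (\<Sum>u=1..N. saga_noise G N lam (X n w) (\<lambda>k. phi n k w) u $ i)"
    unfolding saga_eps_eq_noise
    by (rule real_cond_exp_next_index[OF n])
       (use n in \<open>auto intro!: borel_measurable_vec_nth saga_noise_measurable\<close>)
  moreover have "(\<Sum>u=1..N. saga_noise G N lam (X n w) (\<lambda>k. phi n k w) u $ i) = 0" for w
    using sum_saga_noise[OF N] by (metis sum_component zero_index)
  ultimately show ?thesis
    by simp
qed

lemma real_cond_exp_saga_eps_mult:
  assumes n: "1 \<le> n"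
  shows "AE w in M. real_cond_exp M (filt n) (\<lambda>w. eps n w $ i * eps n w $ j) w
    = (1 / real N) * (\<Sum>u=1..N. saga_noise G N lam (X n w) (\<lambda>k. phi n k w) u $ i
                                * saga_noise G N lam (X n w) (\<lambda>k. phi n k w) u $ j)"
  unfolding saga_eps_eq_noise
  by (rule real_cond_exp_next_index[OF n])
     (use n in \<open>auto intro!: borel_measurable_times borel_measurable_vec_nth saga_noise_measurable\<close>)

lemma AE_frequently_U:
  assumes k: "k \<in> {1..N}"
  shows "AE w in M. \<exists>\<^sub>F m in sequentially. U m w = k"
proof -
  define D where "D m = {w\<in>space M. U m w \<noteq> k}" for m
  have D_gen: "{D m} \<subseteq> gen m" if "m \<in> {2..}" for m
    using that unfolding D_def gen_def by (auto intro!: exI[of _ "UNIV - {k}"])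
  have "indep_events D {2..}"
    unfolding indep_events_def_alt
    by (rule indep_sets_mono_sets[OF indep_sets_mono_index[OF _ indep_gen] D_gen]) auto
  moreover have "prob (D m) \<le> 1 - 1 / real N" if "m \<ge> 2" for m
  proof -
    have "{w\<in>space M. U m w = k} = U m -` {k} \<inter> space M"
      by auto
    also have "\<dots> \<in> events"
      by (rule measurable_sets[OF U_meas[OF that]]) (use k in auto)
    finally have S: "{w\<in>space M. U m w = k} \<in> events" .
    have "D m = space M - {w\<in>space M. U m w = k}"
      unfolding D_def by auto
    then show ?thesis
      by (simp add: prob_compl[OF S] U_unif[OF that k])
  qed
  moreover have "1 - 1 / real N < 1"
    using N by simp
  ultimately have "AE w in M. \<exists>\<^sub>F m in sequentially. w \<notin> D m"
    by (rule AE_frequently_notin_indep_events)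
  from this AE_space show ?thesis
    by eventually_elim (auto simp: D_def elim: frequently_elim1)
qed

lemma AE_saga_phi_tendsto:
  assumes conv: "AE w in M. (\<lambda>n. X n w) \<longlonglongrightarrow> x" and k: "k \<in> {1..N}"
  shows "AE w in M. (\<lambda>n. phi n k w) \<longlonglongrightarrow> x"
  using AE_frequently_U[OF k] conv
proof eventually_elim
  case (elim w)
  then have "\<exists>\<^sub>F n in sequentially. U (Suc n) w = k"
    using eventually_sequentially_Suc[of "\<lambda>m. U m w \<noteq> k"] by (simp add: frequently_def)
  then show ?case
  proof (rule LIMSEQ_of_frequent_reset[OF elim(2)])
    fix n :: nat assume "n \<ge> 1"
    then show "phi (Suc n) k w = (if U (Suc n) w = k then X n w else phi n k w)"
      by (simp add: saga_phi_Suc)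
  qed
qed

lemma AE_cond_cov_saga_eps_tendsto:
  assumes conv: "AE w in M. (\<lambda>n. X n w) \<longlonglongrightarrow> x" and crit: "(\<Sum>k=1..N. G k x) = 0"
  shows "AE w in M. \<forall>i j. (\<lambda>n. real_cond_exp M (filt n) (\<lambda>w. eps n w $ i * eps n w $ j) w)
           \<longlonglongrightarrow> (1 - lam)\<^sup>2 * ((1 / real N) * (\<Sum>k=1..N. G k x $ i * G k x $ j))"
proof -
  let ?a = "\<lambda>n w u. saga_noise G N lam (X n w) (\<lambda>k. phi n k w) u"
  have phi: "AE w in M. \<forall>k\<in>{1..N}. (\<lambda>n. phi n k w) \<longlonglongrightarrow> x"
    using AE_saga_phi_tendsto[OF conv] by (subst AE_ball_countable) auto
  have cov: "AE w in M. \<forall>n i j. 1 \<le> n \<longrightarrow> real_cond_exp M (filt n) (\<lambda>w. eps n w $ i * eps n w $ j) w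
      = (1 / real N) * (\<Sum>u=1..N. ?a n w u $ i * ?a n w u $ j)"
    unfolding AE_all_countable by (intro allI AE_impI real_cond_exp_saga_eps_mult)
  have G: "isCont (G k) x" if "k \<in> {1..N}" for k
    using G_cont[OF that] by (simp add: continuous_on_eq_continuous_at)
  from conv phi cov show ?thesis
  proof eventually_elim
    case (elim w)
    have lim: "(\<lambda>n. (1 / real N) * (\<Sum>u=1..N. ?a n w u $ i * ?a n w u $ j))
        \<longlonglongrightarrow> (1 / real N) * (\<Sum>u=1..N. ((1 - lam) *\<^sub>R G u x) $ i * ((1 - lam) *\<^sub>R G u x) $ j)"
      for i j
      using elim by (intro tendsto_intros tendsto_saga_noise[OF G _ _ crit]) auto
    have limit_eq: "(1 / real N) * (\<Sum>u=1..N. ((1 - lam) *\<^sub>R G u x) $ i * ((1 - lam) *\<^sub>R G u x) $ j)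
        = (1 - lam)\<^sup>2 * ((1 / real N) * (\<Sum>k=1..N. G k x $ i * G k x $ j))" for i j
      by (simp add: sum_distrib_left power2_eq_square mult_ac)
    have ev: "\<forall>\<^sub>F n in sequentially. (1 / real N) * (\<Sum>u=1..N. ?a n w u $ i * ?a n w u $ j)
        = real_cond_exp M (filt n) (\<lambda>w. eps n w $ i * eps n w $ j) w" for i j
      using elim(3) by (intro eventually_sequentiallyI[of 1]) auto
    show ?case
      using lim unfolding limit_eq tendsto_cong[OF ev] by blast
  qed
qed

end

theorem mainTheorem4:
  fixes M :: "'a measure"
    and f :: "nat \<Rightarrow> real^'d \<Rightarrow> real"
    and G :: "nat \<Rightarrow> real^'d \<Rightarrow> real^'d"
    and N :: nat and lam :: real and gam :: "nat \<Rightarrow> real"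
    and X0 X1 :: "'a \<Rightarrow> real^'d"
    and U :: "nat \<Rightarrow> 'a \<Rightarrow> nat"
    and xstar :: "real^'d"
  assumes P: "prob_space M"
    and N: "N \<ge> 1"
    and lam: "0 \<le> lam" "lam \<le> 1"
    and gam: "\<And>n. n \<ge> 1 \<Longrightarrow> gam n > 0"
    and grad: "\<And>k x. k \<in> {1..N} \<Longrightarrow> GDERIV (f k) x :> G k x"
    and grad_cont: "\<And>k. k \<in> {1..N} \<Longrightarrow> continuous_on UNIV (G k)"
    and X0_meas: "X0 \<in> borel_measurable M"
    and X1_meas: "X1 \<in> borel_measurable M"
    and X0_sq: "integrable M (\<lambda>w. (norm (X0 w))\<^sup>2)"
    and X1_sq: "integrable M (\<lambda>w. (norm (X1 w))\<^sup>2)"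
    and U_meas: "\<And>n. n \<ge> 2 \<Longrightarrow> U n \<in> measurable M (count_space {1..N})"
    and U_unif: "\<And>n k. n \<ge> 2 \<Longrightarrow> k \<in> {1..N} \<Longrightarrow>
                   measure M {w \<in> space M. U n w = k} = 1 / real N"
    and indep: "prob_space.indep_sets M
        (\<lambda>i. if i = 0 then {(\<lambda>w. (X0 w, X1 w)) -` A \<inter> space M | A. A \<in> sets borel}
              else {U i -` A \<inter> space M | A. A \<in> sets (count_space UNIV)})
        (insert 0 {2..})"
    and crit: "GDERIV (\<lambda>x. (1 / real N) * (\<Sum>k=1..N. f k x)) xstar :> 0"
    and conv: "AE w in M. (\<lambda>n. saga_X G N lam gam X0 X1 U n w) \<longlonglongrightarrow> xstar"
  shows
    "(\<forall>n\<ge>1. saga_eps G N lam gam X0 X1 U n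
               \<in> borel_measurable (saga_filt M X0 X1 U (n + 1))
           \<and> (\<forall>i. AE w in M. real_cond_exp M (saga_filt M X0 X1 U n)
                   (\<lambda>w. saga_eps G N lam gam X0 X1 U n w $ i) w = 0))
     \<and> (\<forall>k\<in>{1..N}. AE w in M.
           (\<lambda>n. saga_phi G N lam gam X0 X1 U n k w) \<longlonglongrightarrow> xstar)
     \<and> (AE w in M. \<forall>i j.
           (\<lambda>n. real_cond_exp M (saga_filt M X0 X1 U n)
               (\<lambda>w. saga_eps G N lam gam X0 X1 U n w $ i
                    * saga_eps G N lam gam X0 X1 U n w $ j) w)
           \<longlonglongrightarrow> (1 - lam)\<^sup>2 * ((1 / real N) * (\<Sum>k=1..N. G k xstar $ i * G k xstar $ j)))"
proof -
  interpret lambda_saga M G N lam gam X0 X1 U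
    using P N grad_cont U_meas U_unif indep by (simp add: lambda_saga_def lambda_saga_axioms_def)
  have "(1 / real N) *\<^sub>R (\<Sum>k=1..N. G k xstar) = 0"
    using GDERIV_unique[OF GDERIV_scaled_sum[OF grad] crit] by simp
  then have crit_sum: "(\<Sum>k=1..N. G k xstar) = 0"
    using N by simp
  show ?thesis
    using saga_eps_measurable real_cond_exp_saga_eps AE_saga_phi_tendsto[OF conv]
      AE_cond_cov_saga_eps_tendsto[OF conv crit_sum]
    by (intro conjI allI impI ballI) auto
qed

end
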